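(* Let $k\ge 2$ and let $\mathcal{C}$ be the full flag code on $\mathbb{F}_q^{2k}$ constructed from a $k$-spread as described in the context. Let $\mathcal{F}=(\mathcal{F}_1,\ldots,\mathcal{F}_{2k-1})\in\mathcal{C}$ and let $\mathcal{X}=(\mathcal{X}_1,\ldots,\mathcal{X}_{2k-1})$ be a sequence of subspaces with $\mathcal{X}_i\subseteq\mathcal{F}_i$ for all $i$. If there exists $i\in\{1,\ldots,k\}$ with $\mathcal{X}_i\ne\{0\}$, then $\mathcal{F}$ is the unique flag $\mathcal{G}=(\mathcal{G}_1,\ldots,\mathcal{G}_{2k-1})\in\mathcal{C}$ with $\mathcal{X}_i\subseteq\mathcal{G}_i$.
   Context: $q$ is a prime power. Construction: let $\{\mathcal{S}_1,\ldots,\mathcal{S}_{q^k+1}\}$ be a $k$-spread of $\mathbb{F}_q^{2k}$ (a set of $q^k+1$ $k$-dimensional subspaces pairwise intersecting trivially), with full-rank $k\times 2k$ generator matrices $\mathrm{S}_i$ (row space $\mathcal{S}_i$). Let $\mathrm{W}_i=\begin{pmatrix}\mathrm{S}_i\\ \mathrm{S}_{i+1}\end{pmatrix}$ for $i\le q^k$ and $\mathrm{W}_{q^k+1}=\begin{pmatrix}\mathrm{S}_{q^k+1}\\ \mathrm{S}_1\end{pmatrix}$, let $\mathcal{W}_i^{(j)}$ be the row space of the first $j$ rows of $\mathrm{W}_i$, and $\mathcal{C}=\{(\mathcal{W}_i^{(1)},\ldots,\mathcal{W}_i^{(2k-1)}): 1\le i\le q^k+1\}$. *)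

theory Defs
  imports Main
begin

text \<open>Vectors of F_q^n are modelled as functions nat => 'a vanishing from index n on;
  a k x n matrix is a list of k such row vectors.\<close>

definition vecs :: "nat \<Rightarrow> (nat \<Rightarrow> 'a::zero) set" where
  "vecs n = {v. \<forall>t\<ge>n. v t = 0}"

definition lin_comb :: "(nat \<Rightarrow> 'a::comm_ring_1) list \<Rightarrow> (nat \<Rightarrow> 'a) \<Rightarrow> (nat \<Rightarrow> 'a)" where
  "lin_comb rs c = (\<lambda>t. \<Sum>i<length rs. c i * (rs ! i) t)"

definition rowspace :: "(nat \<Rightarrow> 'a::comm_ring_1) list \<Rightarrow> (nat \<Rightarrow> 'a) set" where
  "rowspace rs = {lin_comb rs c | c. True}"

definition rows_indep :: "(nat \<Rightarrow> 'a::comm_ring_1) list \<Rightarrow> bool" where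
  "rows_indep rs \<longleftrightarrow> (\<forall>c. lin_comb rs c = (\<lambda>_. 0) \<longrightarrow> (\<forall>i<length rs. c i = 0))"

definition is_subspace :: "nat \<Rightarrow> (nat \<Rightarrow> 'a::field) set \<Rightarrow> bool" where
  "is_subspace n U \<longleftrightarrow> U \<subseteq> vecs n \<and> (\<lambda>_. 0) \<in> U \<and>
     (\<forall>u\<in>U. \<forall>v\<in>U. (\<lambda>t. u t + v t) \<in> U) \<and> (\<forall>a. \<forall>u\<in>U. (\<lambda>t. a * u t) \<in> U)"

text \<open>S i (1 <= i <= q^k+1) is a full-rank k x 2k generator matrix of the i-th spread
  element; q = card (UNIV::'a set).\<close>
definition is_spread_gen :: "nat \<Rightarrow> (nat \<Rightarrow> (nat \<Rightarrow> 'a::{finite,field}) list) \<Rightarrow> bool" where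
  "is_spread_gen k S \<longleftrightarrow>
     (\<forall>i\<in>{1..card (UNIV::'a set)^k+1}. length (S i) = k \<and> set (S i) \<subseteq> vecs (2*k) \<and> rows_indep (S i)) \<and>
     (\<forall>i\<in>{1..card (UNIV::'a set)^k+1}. \<forall>j\<in>{1..card (UNIV::'a set)^k+1}. i \<noteq> j \<longrightarrow>
        rowspace (S i) \<inter> rowspace (S j) = {(\<lambda>_. 0)})"

definition Wmat :: "nat \<Rightarrow> (nat \<Rightarrow> (nat \<Rightarrow> 'a::{finite,field}) list) \<Rightarrow> nat \<Rightarrow> (nat \<Rightarrow> 'a) list" where
  "Wmat k S i = (if i \<le> card (UNIV::'a set)^k then S i @ S (i+1) else S (card (UNIV::'a set)^k+1) @ S 1)"

text \<open>The flag (W_i^(1), ..., W_i^(2k-1)), as a function on indices 1..2k-1 (empty elsewhere).\<close>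
definition spread_flag :: "nat \<Rightarrow> (nat \<Rightarrow> (nat \<Rightarrow> 'a::{finite,field}) list) \<Rightarrow> nat \<Rightarrow> nat \<Rightarrow> (nat \<Rightarrow> 'a) set" where
  "spread_flag k S i = (\<lambda>j. if j \<in> {1..2*k-1} then rowspace (take j (Wmat k S i)) else {})"

definition spread_flag_code :: "nat \<Rightarrow> (nat \<Rightarrow> (nat \<Rightarrow> 'a::{finite,field}) list) \<Rightarrow> (nat \<Rightarrow> (nat \<Rightarrow> 'a) set) set" where
  "spread_flag_code k S = {spread_flag k S i | i. i \<in> {1..card (UNIV::'a set)^k+1}}"

end

theory Submission
  imports Defs
begin

text \<open>For \<open>j \<le> k\<close> the first \<open>j\<close> rows of \<open>W\<^sub>i\<close> are rows of \<open>S\<^sub>i\<close>, so the \<open>j\<close>-th subspace of the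
  \<open>i\<close>-th flag lies in the spread element \<open>\<S>\<^sub>i\<close>. Distinct spread elements meet trivially, hence a
  nonzero vector of \<open>\<X>\<^sub>j\<close> lies in the \<open>j\<close>-th subspace of only one flag of the code.
  The argument does not use \<open>k \<ge> 2\<close>.\<close>

lemma lin_comb_take:
  "lin_comb (take j rs) c = lin_comb rs (\<lambda>i. if i < j then c i else 0)"
proof
  fix t
  have "(\<Sum>i<length rs. (if i < j then c i else 0) * (rs ! i) t)
      = (\<Sum>i\<in>{..<length rs} \<inter> {i. i < j}. c i * (rs ! i) t)"
    by (simp add: sum.inter_restrict) (rule sum.cong, auto)
  also have "{..<length rs} \<inter> {i. i < j} = {..<length (take j rs)}"
    by auto
  finally show "lin_comb (take j rs) c t = lin_comb rs (\<lambda>i. if i < j then c i else 0) t"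
    unfolding lin_comb_def by simp
qed

lemma rowspace_take_subset: "rowspace (take j rs) \<subseteq> rowspace rs"
  unfolding rowspace_def using lin_comb_take by blast

lemma Wmat_eq_append:
  fixes S :: "nat \<Rightarrow> (nat \<Rightarrow> 'a::{finite,field}) list"
  assumes "i \<le> card (UNIV::'a set)^k + 1"
  obtains T where "Wmat k S i = S i @ T"
proof (cases "i \<le> card (UNIV::'a set)^k")
  case True
  then show ?thesis
    using that unfolding Wmat_def by simp
next
  case False
  then have "i = card (UNIV::'a set)^k + 1"
    using assms by simp
  then show ?thesis
    using that unfolding Wmat_def by simp
qed

lemma spread_flag_subset_rowspace:
  fixes S :: "nat \<Rightarrow> (nat \<Rightarrow> 'a::{finite,field}) list"
  assumes j: "j \<in> {1..k}" and "i \<le> card (UNIV::'a set)^k + 1" and "length (S i) = k"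
  shows "spread_flag k S i j \<subseteq> rowspace (S i)"
proof -
  obtain T where W: "Wmat k S i = S i @ T"
    using Wmat_eq_append[OF assms(2)] by blast
  have "j \<in> {1..2*k-1}"
    using j by auto
  then have "spread_flag k S i j = rowspace (take j (S i @ T))"
    unfolding spread_flag_def W by simp
  also have "\<dots> = rowspace (take j (S i))"
    using j assms(3) by simp
  finally show ?thesis
    using rowspace_take_subset by simp
qed

lemma spread_flag_eq_if_common_nonzero:
  fixes S :: "nat \<Rightarrow> (nat \<Rightarrow> 'a::{finite,field}) list"
  assumes spread: "is_spread_gen k S"
    and a: "a \<in> {1..card (UNIV::'a set)^k + 1}" and b: "b \<in> {1..card (UNIV::'a set)^k + 1}"
    and j: "j \<in> {1..k}"
    and "v \<in> spread_flag k S a j" and "v \<in> spread_flag k S b j" and "v \<noteq> (\<lambda>_. 0)"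
  shows "a = b"
proof -
  have "length (S a) = k" and "length (S b) = k"
    using spread a b unfolding is_spread_gen_def by auto
  then have "v \<in> rowspace (S a)" and "v \<in> rowspace (S b)"
    using assms(5,6) spread_flag_subset_rowspace[OF j] a b by auto
  then show ?thesis
    using spread a b \<open>v \<noteq> (\<lambda>_. 0)\<close> unfolding is_spread_gen_def by blast
qed

theorem proposition4p11:
  fixes k :: nat and S :: "nat \<Rightarrow> (nat \<Rightarrow> 'a::{finite,field}) list"
    and F X :: "nat \<Rightarrow> (nat \<Rightarrow> 'a) set"
  assumes "k \<ge> 2"
    and "is_spread_gen k S"
    and "F \<in> spread_flag_code k S"
    and "\<forall>j\<in>{1..2*k-1}. is_subspace (2*k) (X j) \<and> X j \<subseteq> F j"
    and "\<exists>i\<in>{1..k}. X i \<noteq> {(\<lambda>_. 0)}"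
  shows "\<forall>G\<in>spread_flag_code k S. (\<forall>j\<in>{1..2*k-1}. X j \<subseteq> G j) \<longrightarrow> G = F"
proof (intro ballI impI)
  fix G assume G: "G \<in> spread_flag_code k S" and GX: "\<forall>j\<in>{1..2*k-1}. X j \<subseteq> G j"
  obtain a where a: "a \<in> {1..card (UNIV::'a set)^k + 1}" "F = spread_flag k S a"
    using assms(3) unfolding spread_flag_code_def by blast
  obtain b where b: "b \<in> {1..card (UNIV::'a set)^k + 1}" "G = spread_flag k S b"
    using G unfolding spread_flag_code_def by blast
  obtain j where j: "j \<in> {1..k}" "X j \<noteq> {(\<lambda>_. 0)}"
    using assms(5) by blast
  have j_range: "j \<in> {1..2*k-1}"
    using j(1) by auto
  have "(\<lambda>_. 0) \<in> X j"
    using assms(4) j_range unfolding is_subspace_def by blast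
  then obtain v where v: "v \<in> X j" "v \<noteq> (\<lambda>_. 0)"
    using j(2) by blast
  have "a = b"
    using spread_flag_eq_if_common_nonzero[OF assms(2) a(1) b(1) j(1) _ _ v(2)]
      v(1) assms(4) GX j_range a(2) b(2) by blast
  then show "G = F"
    using a b by simp
qed

end
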